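(* Let $p_0:=1$ and, for $N\ge1$, $p_N:=\mathbb P\big(\bigcap_{j=1}^N\{\max(Y_{j-1},Y_j)\ge\max(Y_{j,0},Y_{j,1})\}\big)$, where $Y_0,Y_1,\dots,Y_N,Y_{1,0},Y_{1,1},\dots,Y_{N,0},Y_{N,1}$ are i.i.d. with a continuous distribution. Then for all $N\ge1$, $$p_N=\frac1{3N+1}\Big(2p_{N-1}+\sum_{j=2}^N p_{j-2}\,p_{N-j}\Big),$$ and the generating function $f(z)=\sum_{N\ge0}p_Nz^N$ (analytic near $0$) satisfies $f+3zf'=1+2zf+z^2f^2$.
   Context: All random variables are independent with the same continuous distribution; $p_N$ does not depend on which continuous distribution is used. *)

theory Defs
  imports "HOL-Probability.Probability"
begin

text \<open>Index set of the random variables: Inl j stands for Y_j (0 \<le> j \<le> N),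
  Inr (j,i) stands for Y_{j,i} (1 \<le> j \<le> N, i \<in> {0,1}).\<close>
definition idx :: "nat \<Rightarrow> (nat + nat \<times> nat) set" where
  "idx N = Inl ` {0..N} \<union> Inr ` ({1..N} \<times> {0,1})"

definition jointM :: "real measure \<Rightarrow> nat \<Rightarrow> ((nat + nat \<times> nat) \<Rightarrow> real) measure" where
  "jointM M N = PiM (idx N) (\<lambda>_. M)"

definition event :: "real measure \<Rightarrow> nat \<Rightarrow> ((nat + nat \<times> nat) \<Rightarrow> real) set" where
  "event M N = {\<omega> \<in> space (jointM M N).
     \<forall>j\<in>{1..N}. max (\<omega> (Inr (j,0))) (\<omega> (Inr (j,1))) \<le> max (\<omega> (Inl (j-1))) (\<omega> (Inl j))}"

definition pN :: "real measure \<Rightarrow> nat \<Rightarrow> real" where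
  "pN M N = (if N = 0 then 1 else measure (jointM M N) (event M N))"

definition gf :: "real measure \<Rightarrow> complex \<Rightarrow> complex" where
  "gf M z = (\<Sum>N. complex_of_real (pN M N) * z ^ N)"

end

theory Submission
  imports Defs "HOL-Analysis.FPS_Convergence"
begin

(* Condition on the largest variable of a chain Y_l, ..., Y_r together with its pairs Y_{j,0}, Y_{j,1}
   (l < j \<le> r). Ties have probability zero, and the maximum is never one of the Y_{j,i}, since the
   condition at j then fails. If the maximum is Y_k = y, the event splits into independent copies of
   itself on the chains l..k-1 and k+1..r, while the two pairs next to Y_k only have to lie below y.
   Writing F(y) = P(Y < y), induction on n = r - l shows that the chain satisfies the event with all
   its 3n+1 variables below y with probability p_n F(y)^(3n+1); integrating over the value of the
   maximum gives (3n+1) p_n = sum_{k=0..n} q_k q_(n-k) with q_0 = 1 and q_k = p_(k-1). As q is the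
   coefficient sequence of 1 + z f, this is f + 3 z f' = (1 + z f)^2. *)

definition dominated_at :: "((nat + nat \<times> nat) \<Rightarrow> real) \<Rightarrow> nat \<Rightarrow> bool" where
  "dominated_at \<omega> j \<longleftrightarrow> max (\<omega> (Inr (j,0))) (\<omega> (Inr (j,1))) \<le> max (\<omega> (Inl (j-1))) (\<omega> (Inl j))"

definition chain_event :: "nat \<Rightarrow> nat \<Rightarrow> ((nat + nat \<times> nat) \<Rightarrow> real) \<Rightarrow> bool" where
  "chain_event l r \<omega> \<longleftrightarrow> (\<forall>j\<in>{Suc l..r}. dominated_at \<omega> j)"

definition chain_block :: "nat \<Rightarrow> nat \<Rightarrow> (nat + nat \<times> nat) set" where
  "chain_block l r = Inl ` {l..r} \<union> Inr ` ({Suc l..r} \<times> {0,1})"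

(* The coordinates read by chain_event l r. Unlike chain_block l r it is empty for r \<le> l, which
   matters for the empty left part chain_event 0 (0 - 1) = chain_event 0 0. *)
definition chain_support :: "nat \<Rightarrow> nat \<Rightarrow> (nat + nat \<times> nat) set" where
  "chain_support l r = (\<Union>j\<in>{Suc l..r}. {Inl (j-1), Inl j, Inr (j,0), Inr (j,1)})"

lemma finite_chain_block [simp]: "finite (chain_block l r)"
  by (simp add: chain_block_def)

lemma Inl_in_chain_block [simp]: "Inl k \<in> chain_block l r \<longleftrightarrow> l \<le> k \<and> k \<le> r"
  by (auto simp: chain_block_def)

lemma Inr_in_chain_block [simp]: "Inr (j,i) \<in> chain_block l r \<longleftrightarrow> l < j \<and> j \<le> r \<and> (i = 0 \<or> i = 1)"
  by (auto simp: chain_block_def)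

lemma idx_eq_chain_block: "idx N = chain_block 0 N"
  by (simp add: idx_def chain_block_def)

lemma chain_support_subset_chain_block: "chain_support l r \<subseteq> chain_block l r"
  by (auto simp: chain_support_def)

(* Removing Y_k from the chain on l..r leaves two independent parts: the chain on l..k-1 with the
   pair Y_{k,0}, Y_{k,1}, and the chain on k+1..r with the pair Y_{k+1,0}, Y_{k+1,1}. *)
definition left_wing :: "nat \<Rightarrow> nat \<Rightarrow> (nat + nat \<times> nat) set" where
  "left_wing l k = Inl ` {l..<k} \<union> Inr ` ({l<..k} \<times> {0,1})"

definition right_wing :: "nat \<Rightarrow> nat \<Rightarrow> (nat + nat \<times> nat) set" where
  "right_wing k r = Inl ` {k<..r} \<union> Inr ` ({k<..r} \<times> {0,1})"

lemma finite_left_wing [simp]: "finite (left_wing l k)"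
  by (simp add: left_wing_def)

lemma finite_right_wing [simp]: "finite (right_wing k r)"
  by (simp add: right_wing_def)

lemma Inl_in_left_wing [simp]: "Inl i \<in> left_wing l k \<longleftrightarrow> l \<le> i \<and> i < k"
  by (auto simp: left_wing_def)

lemma Inr_in_left_wing [simp]: "Inr (j,i) \<in> left_wing l k \<longleftrightarrow> l < j \<and> j \<le> k \<and> (i = 0 \<or> i = 1)"
  by (auto simp: left_wing_def)

lemma Inl_in_right_wing [simp]: "Inl i \<in> right_wing k r \<longleftrightarrow> k < i \<and> i \<le> r"
  by (auto simp: right_wing_def)

lemma Inr_in_right_wing [simp]: "Inr (j,i) \<in> right_wing k r \<longleftrightarrow> k < j \<and> j \<le> r \<and> (i = 0 \<or> i = 1)"
  by (auto simp: right_wing_def)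

lemma chain_block_minus_Inl:
  assumes "l \<le> k" "k \<le> r"
  shows "chain_block l r - {Inl k} = left_wing l k \<union> right_wing k r"
proof (rule set_eqI)
  fix z :: "nat + nat \<times> nat"
  show "z \<in> chain_block l r - {Inl k} \<longleftrightarrow> z \<in> left_wing l k \<union> right_wing k r"
    using assms by (cases z) auto
qed

lemma left_wing_Int_right_wing: "left_wing l k \<inter> right_wing k r = {}"
  by (auto simp: left_wing_def right_wing_def)

lemma left_wing_eq:
  assumes "l < k"
  shows "left_wing l k = chain_block l (k-1) \<union> {Inr (k,0), Inr (k,1)}"
proof (rule set_eqI)
  fix z :: "nat + nat \<times> nat"
  show "z \<in> left_wing l k \<longleftrightarrow> z \<in> chain_block l (k-1) \<union> {Inr (k,0), Inr (k,1)}"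
    using assms by (cases z) auto
qed

lemma right_wing_eq:
  assumes "k < r"
  shows "right_wing k r = chain_block (Suc k) r \<union> {Inr (Suc k,0), Inr (Suc k,1)}"
proof (rule set_eqI)
  fix z :: "nat + nat \<times> nat"
  show "z \<in> right_wing k r \<longleftrightarrow> z \<in> chain_block (Suc k) r \<union> {Inr (Suc k,0), Inr (Suc k,1)}"
    using assms by (cases z) auto
qed

lemma chain_support_subset_left_wing: "chain_support l (k-1) \<subseteq> left_wing l k"
  by (auto simp: chain_support_def)

lemma chain_support_subset_right_wing: "chain_support (Suc k) r \<subseteq> right_wing k r"
  by (auto simp: chain_support_def)

lemma chain_event_cong:
  assumes "\<And>i. i \<in> chain_support l r \<Longrightarrow> \<omega> i = \<omega>' i"
  shows "chain_event l r \<omega> = chain_event l r \<omega>'"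
  unfolding chain_event_def
proof (intro ball_cong refl)
  fix j assume "j \<in> {Suc l..r}"
  then have "\<omega> i = \<omega>' i" if "i \<in> {Inl (j-1), Inl j, Inr (j,0), Inr (j,1)}" for i
    using that by (intro assms) (auto simp: chain_support_def)
  then show "dominated_at \<omega> j = dominated_at \<omega>' j"
    by (simp add: dominated_at_def)
qed

lemma chain_event_upd_Inl:
  assumes lkr: "l \<le> k" "k \<le> r" and below: "\<And>b. b \<in> chain_block l r - {Inl k} \<Longrightarrow> x b < y"
  shows "chain_event l r (x(Inl k := y)) \<longleftrightarrow> chain_event l (k-1) x \<and> chain_event (Suc k) r x"
proof -
  have near: "dominated_at (x(Inl k := y)) j" if "j \<in> {Suc l..r}" "j = k \<or> j = Suc k" for j
  proof -
    have "x (Inr (j,0)) < y" "x (Inr (j,1)) < y"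
      using that lkr by (auto intro!: below)
    then show ?thesis
      using that by (auto simp: dominated_at_def)
  qed
  have far: "dominated_at (x(Inl k := y)) j \<longleftrightarrow> dominated_at x j" if "j \<noteq> k" "j \<noteq> Suc k" for j
    using that by (auto simp: dominated_at_def)
  have "chain_event l r (x(Inl k := y)) \<longleftrightarrow> (\<forall>j\<in>{Suc l..r} - {k, Suc k}. dominated_at (x(Inl k := y)) j)"
    unfolding chain_event_def using near by blast
  also have "\<dots> \<longleftrightarrow> (\<forall>j\<in>{Suc l..k-1} \<union> {Suc (Suc k)..r}. dominated_at x j)"
    using lkr far by (intro ball_cong) auto
  finally show ?thesis
    by (simp add: chain_event_def ball_Un)
qed

lemma not_chain_event_upd_Inr:
  assumes j: "l < j" "j \<le> r" "i = 0 \<or> i = 1"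
    and below: "\<And>b. b \<in> chain_block l r - {Inr (j,i)} \<Longrightarrow> x b < y"
  shows "\<not> chain_event l r (x(Inr (j,i) := y))"
proof
  assume "chain_event l r (x(Inr (j,i) := y))"
  then have "dominated_at (x(Inr (j,i) := y)) j"
    using j by (auto simp: chain_event_def)
  moreover have "x (Inl (j-1)) < y" "x (Inl j) < y"
    using j by (auto intro!: below)
  ultimately show False
    using j(3) by (auto simp: dominated_at_def max_def split: if_splits)
qed

context real_distribution
begin

abbreviation iid :: "'i set \<Rightarrow> ('i \<Rightarrow> real) measure" where
  "iid I \<equiv> PiM I (\<lambda>_. M)"

lemma product_sigma_finite_iid: "product_sigma_finite (\<lambda>_::'i. M)"
  unfolding product_sigma_finite_def by (simp add: prob_space_imp_sigma_finite prob_space_axioms)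

lemma prob_space_iid: "prob_space (iid I)"
  by (simp add: prob_space_PiM prob_space_axioms)

lemma space_iid: "space (iid I) = PiE I (\<lambda>_. UNIV)"
  by (simp add: space_PiM)

lemma fun_upd_in_space_iid:
  assumes "x \<in> space (iid (I - {a}))" "a \<in> I"
  shows "x(a := y) \<in> space (iid I)"
  using assms by (auto simp: space_iid PiE_def extensional_def)

lemma emeasure_iid_box:
  assumes "finite J" "A \<in> sets borel"
  shows "emeasure (iid J) {\<omega>\<in>space (iid J). \<forall>i\<in>J. \<omega> i \<in> A} = emeasure M A ^ card J"
proof -
  have "{\<omega>\<in>space (iid J). \<forall>i\<in>J. \<omega> i \<in> A} = PiE J (\<lambda>_. A)"
    by (auto simp: space_iid PiE_def Pi_def)
  then show ?thesis
    using product_sigma_finite.emeasure_PiM[OF product_sigma_finite_iid, of J "\<lambda>_. A"] assms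
    by simp
qed

lemma emeasure_iid_coordinate:
  assumes "finite J" "b \<in> J" "A \<in> sets borel"
  shows "emeasure (iid J) {\<omega>\<in>space (iid J). \<omega> b \<in> A} = emeasure M A"
proof -
  have "{\<omega>\<in>space (iid J). \<omega> b \<in> A} = PiE J (\<lambda>i. if i = b then A else UNIV)"
    using assms(2) by (auto simp: space_iid PiE_def Pi_def split: if_splits)
  then have "emeasure (iid J) {\<omega>\<in>space (iid J). \<omega> b \<in> A}
      = (\<Prod>i\<in>J. emeasure M (if i = b then A else UNIV))"
    using product_sigma_finite.emeasure_PiM[OF product_sigma_finite_iid, of J "\<lambda>i. if i = b then A else UNIV"]
      assms by simp
  also have "\<dots> = (\<Prod>i\<in>J. if i = b then emeasure M A else 1)"
    by (rule prod.cong) (auto simp: emeasure_space_1[simplified])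
  finally show ?thesis
    using assms by (simp add: prod.delta)
qed

lemma emeasure_iid_insert:
  assumes "finite I" "a \<in> I" "A \<in> sets (iid I)"
  shows "emeasure (iid I) A
    = (\<integral>\<^sup>+y. emeasure (iid (I-{a})) {x\<in>space (iid (I-{a})). x(a:=y) \<in> A} \<partial>M)"
proof -
  have I: "insert a (I-{a}) = I"
    using assms(2) by auto
  have A: "A \<in> sets (iid (insert a (I-{a})))"
    using assms(3) I by simp
  have upd: "(\<lambda>x. x(a:=y)) \<in> measurable (iid (I-{a})) (iid (insert a (I-{a})))" for y
  proof -
    have "(\<lambda>x. (\<lambda>(f, y). f(a := y)) (x, y)) \<in> measurable (iid (I-{a})) (iid (insert a (I-{a})))"
      by measurable
    then show ?thesis by simp
  qed
  have "emeasure (iid I) A = (\<integral>\<^sup>+\<omega>. indicator A \<omega> \<partial>iid (insert a (I-{a})))"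
    using assms(3) I by simp
  also have "\<dots> = (\<integral>\<^sup>+y. (\<integral>\<^sup>+x. indicator A (x(a:=y)) \<partial>iid (I-{a})) \<partial>M)"
    using A assms(1)
    by (intro product_sigma_finite.product_nn_integral_insert_rev[OF product_sigma_finite_iid]) auto
  also have "\<dots> = (\<integral>\<^sup>+y. emeasure (iid (I-{a})) {x\<in>space (iid (I-{a})). x(a:=y) \<in> A} \<partial>M)"
  proof (intro nn_integral_cong)
    fix y
    have "{x\<in>space (iid (I-{a})). x(a:=y) \<in> A} = (\<lambda>x. x(a:=y)) -` A \<inter> space (iid (I-{a}))"
      by auto
    then have "{x\<in>space (iid (I-{a})). x(a:=y) \<in> A} \<in> sets (iid (I-{a}))"
      using measurable_sets[OF upd A] by simp
    then show "(\<integral>\<^sup>+x. indicator A (x(a:=y)) \<partial>iid (I-{a}))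
        = emeasure (iid (I-{a})) {x\<in>space (iid (I-{a})). x(a:=y) \<in> A}"
      by (simp add: nn_integral_indicator[symmetric] indicator_def cong: nn_integral_cong)
  qed
  finally show ?thesis .
qed

lemma emeasure_iid_conj_disjoint:
  assumes fin: "finite I" "finite J" and IJ: "I \<inter> J = {}"
    and local1: "\<And>\<omega> \<omega>'. (\<forall>i\<in>I. \<omega> i = \<omega>' i) \<Longrightarrow> Q1 \<omega> = Q1 \<omega>'"
    and local2: "\<And>\<omega> \<omega>'. (\<forall>i\<in>J. \<omega> i = \<omega>' i) \<Longrightarrow> Q2 \<omega> = Q2 \<omega>'"
    and meas1: "Measurable.pred (iid I) Q1" and meas2: "Measurable.pred (iid J) Q2"
  shows "emeasure (iid (I \<union> J)) {\<omega>\<in>space (iid (I \<union> J)). Q1 \<omega> \<and> Q2 \<omega>}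
     = emeasure (iid I) {\<omega>\<in>space (iid I). Q1 \<omega>} * emeasure (iid J) {\<omega>\<in>space (iid J). Q2 \<omega>}"
proof -
  have restrict1: "Q1 \<omega> = Q1 (restrict \<omega> I)" for \<omega>
    by (rule local1) simp
  have restrict2: "Q2 \<omega> = Q2 (restrict \<omega> J)" for \<omega>
    by (rule local2) simp
  have "Measurable.pred (iid (I \<union> J)) (\<lambda>\<omega>. Q1 (restrict \<omega> I))"
    by (rule measurable_compose[OF measurable_restrict_subset meas1]) auto
  moreover have "Measurable.pred (iid (I \<union> J)) (\<lambda>\<omega>. Q2 (restrict \<omega> J))"
    by (rule measurable_compose[OF measurable_restrict_subset meas2]) auto
  ultimately have "Measurable.pred (iid (I \<union> J)) (\<lambda>\<omega>. Q1 \<omega> \<and> Q2 \<omega>)"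
    unfolding restrict1[symmetric] restrict2[symmetric] by measurable
  then have "emeasure (iid (I \<union> J)) {\<omega>\<in>space (iid (I \<union> J)). Q1 \<omega> \<and> Q2 \<omega>}
     = (\<integral>\<^sup>+x. emeasure (iid J) ((\<lambda>y. merge I J (x, y)) -` {\<omega>\<in>space (iid (I \<union> J)). Q1 \<omega> \<and> Q2 \<omega>}
          \<inter> space (iid J)) \<partial>iid I)"
    using product_sigma_finite.emeasure_fold_integral[OF product_sigma_finite_iid IJ fin] by simp
  also have "\<dots> = (\<integral>\<^sup>+x. emeasure (iid J) {\<omega>\<in>space (iid J). Q2 \<omega>} * indicator {\<omega>\<in>space (iid I). Q1 \<omega>} x \<partial>iid I)"
  proof (rule nn_integral_cong)
    fix x assume x: "x \<in> space (iid I)"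
    have "Q1 (merge I J (x, y)) = Q1 x" "Q2 (merge I J (x, y)) = Q2 y" for y
      using IJ by (auto intro!: local1 local2 simp: merge_def)
    then have "(\<lambda>y. merge I J (x, y)) -` {\<omega>\<in>space (iid (I \<union> J)). Q1 \<omega> \<and> Q2 \<omega>} \<inter> space (iid J)
        = (if Q1 x then {\<omega>\<in>space (iid J). Q2 \<omega>} else {})"
      using x by (auto simp: space_iid)
    then show "emeasure (iid J) ((\<lambda>y. merge I J (x, y)) -` {\<omega>\<in>space (iid (I \<union> J)). Q1 \<omega> \<and> Q2 \<omega>}
          \<inter> space (iid J)) = emeasure (iid J) {\<omega>\<in>space (iid J). Q2 \<omega>} * indicator {\<omega>\<in>space (iid I). Q1 \<omega>} x"
      using x by (simp add: indicator_def)
  qed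
  also have "\<dots> = emeasure (iid J) {\<omega>\<in>space (iid J). Q2 \<omega>} * emeasure (iid I) {\<omega>\<in>space (iid I). Q1 \<omega>}"
    using meas1 by (simp add: nn_integral_cmult_indicator)
  finally show ?thesis
    by (simp add: mult.commute)
qed

definition max_at :: "'i set \<Rightarrow> 'i \<Rightarrow> ('i \<Rightarrow> real) set" where
  "max_at I a = {\<omega>\<in>space (iid I). \<forall>b\<in>I-{a}. \<omega> b < \<omega> a}"

definition max_section :: "'i set \<Rightarrow> ('i \<Rightarrow> real) set \<Rightarrow> 'i \<Rightarrow> real \<Rightarrow> ('i \<Rightarrow> real) set" where
  "max_section I A a y = {x\<in>space (iid (I-{a})). x(a:=y) \<in> A \<and> (\<forall>b\<in>I-{a}. x b < y)}"

definition ties :: "'i set \<Rightarrow> ('i \<Rightarrow> real) set" where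
  "ties I = (\<Union>a\<in>I. \<Union>b\<in>I - {a}. {\<omega>\<in>space (iid I). \<omega> a = \<omega> b})"

lemma sets_max_at:
  assumes "finite I" "a \<in> I"
  shows "max_at I a \<in> sets (iid I)"
proof -
  have "Measurable.pred (iid I) (\<lambda>\<omega>. \<omega> b < \<omega> a)" if "b \<in> I - {a}" for b
  proof -
    have "b \<in> I"
      using that by simp
    then show ?thesis
      using assms(2) by measurable
  qed
  then show ?thesis
    unfolding max_at_def using assms(1) by (simp add: pred_def[symmetric] pred_intros_finite)
qed

lemma disjoint_family_max_at: "disjoint_family_on (max_at I) I"
  unfolding disjoint_family_on_def
proof (intro ballI impI equalityI subsetI)
  fix a a' \<omega> assume "a \<in> I" "a' \<in> I" "a \<noteq> a'" "\<omega> \<in> max_at I a \<inter> max_at I a'"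
  then have "\<omega> a' < \<omega> a" "\<omega> a < \<omega> a'"
    by (auto simp: max_at_def)
  then show "\<omega> \<in> {}"
    by simp
qed auto

lemma space_iid_subset_max_at_ties:
  assumes "finite I" "I \<noteq> {}"
  shows "space (iid I) \<subseteq> (\<Union>a\<in>I. max_at I a) \<union> ties I"
proof
  fix \<omega> assume \<omega>: "\<omega> \<in> space (iid I)"
  have "Max (\<omega> ` I) \<in> \<omega> ` I"
    using assms by simp
  then obtain a where a: "a \<in> I" "\<omega> a = Max (\<omega> ` I)"
    by auto
  have "\<omega> \<in> ties I" if "\<omega> \<notin> max_at I a"
  proof -
    obtain b where b: "b \<in> I - {a}" "\<omega> a \<le> \<omega> b"
      using \<omega> \<open>\<omega> \<notin> max_at I a\<close> by (auto simp: max_at_def not_less)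
    moreover have "\<omega> b \<le> \<omega> a"
      using a assms(1) b(1) by simp
    ultimately have "\<omega> a = \<omega> b"
      by simp
    then show ?thesis
      using \<omega> a(1) b(1) unfolding ties_def by blast
  qed
  then show "\<omega> \<in> (\<Union>a\<in>I. max_at I a) \<union> ties I"
    using a(1) by blast
qed

lemma emeasure_Int_max_at:
  assumes "finite I" "a \<in> I" "A \<in> sets (iid I)"
  shows "emeasure (iid I) (A \<inter> max_at I a) = (\<integral>\<^sup>+y. emeasure (iid (I-{a})) (max_section I A a y) \<partial>M)"
proof -
  have "{x\<in>space (iid (I-{a})). x(a:=y) \<in> A \<inter> max_at I a} = max_section I A a y" for y
    using assms(2) by (auto simp: max_at_def max_section_def space_iid PiE_def extensional_def)
  then show ?thesis
    using emeasure_iid_insert[OF assms(1,2)] assms(3) sets_max_at[OF assms(1,2)] by simp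
qed

end

definition down_closed :: "real set \<Rightarrow> bool" where
  "down_closed S \<longleftrightarrow> (\<forall>x y. y \<in> S \<longrightarrow> x < y \<longrightarrow> x \<in> S)"

locale continuous_real_distribution = real_distribution +
  assumes measure_singleton: "measure M {x} = 0"
begin

lemma emeasure_singleton: "emeasure M {x} = 0"
  using measure_singleton[of x] by (simp add: emeasure_eq_measure)

lemma tie_null:
  assumes "finite I" "a \<in> I" "b \<in> I" "a \<noteq> b"
  shows "{\<omega>\<in>space (iid I). \<omega> a = \<omega> b} \<in> null_sets (iid I)"
proof -
  have tie: "{\<omega>\<in>space (iid I). \<omega> a = \<omega> b} \<in> sets (iid I)"
    using assms by measurable
  have "{x\<in>space (iid (I-{a})). x(a:=y) \<in> {\<omega>\<in>space (iid I). \<omega> a = \<omega> b}}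
      = {x\<in>space (iid (I-{a})). x b \<in> {y}}" for y
    using assms by (auto simp: space_iid PiE_def extensional_def)
  then have "emeasure (iid I) {\<omega>\<in>space (iid I). \<omega> a = \<omega> b}
      = (\<integral>\<^sup>+y. emeasure (iid (I-{a})) {x\<in>space (iid (I-{a})). x b \<in> {y}} \<partial>M)"
    using emeasure_iid_insert[OF assms(1,2) tie] by simp
  also have "\<dots> = (\<integral>\<^sup>+y. 0 \<partial>M)"
  proof (intro nn_integral_cong)
    fix y
    show "emeasure (iid (I-{a})) {x\<in>space (iid (I-{a})). x b \<in> {y}} = 0"
      using emeasure_iid_coordinate[of "I-{a}" b "{y}"] assms emeasure_singleton[of y] by simp
  qed
  finally show ?thesis
    using tie by (simp add: null_sets_def)
qed

lemma ties_null:
  assumes "finite I"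
  shows "ties I \<in> null_sets (iid I)"
proof -
  have ties_at: "(\<Union>b\<in>I - {a}. {\<omega>\<in>space (iid I). \<omega> a = \<omega> b}) \<in> null_sets (iid I)" if "a \<in> I" for a
    using assms that by (intro null_sets_UN' countable_finite) (auto intro: tie_null)
  show ?thesis
    unfolding ties_def using assms by (rule null_sets_UN'[OF countable_finite ties_at])
qed

lemma emeasure_iid_split_max:
  assumes fin: "finite I" and "I \<noteq> {}" and A: "A \<in> sets (iid I)"
  shows "emeasure (iid I) A = (\<Sum>a\<in>I. \<integral>\<^sup>+y. emeasure (iid (I-{a})) (max_section I A a y) \<partial>M)"
proof -
  define U where "U = (\<Union>a\<in>I. A \<inter> max_at I a)"
  have U: "U \<in> sets (iid I)"
    unfolding U_def using sets_max_at[OF fin] A fin by (intro sets.finite_UN) auto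
  have "A - U \<subseteq> ties I"
  proof
    fix \<omega> assume \<omega>: "\<omega> \<in> A - U"
    then have "\<omega> \<in> space (iid I)"
      using sets.sets_into_space[OF A] by auto
    moreover have "\<omega> \<notin> max_at I a" if "a \<in> I" for a
      using \<omega> that unfolding U_def by blast
    ultimately show "\<omega> \<in> ties I"
      using space_iid_subset_max_at_ties[OF fin assms(2)] by blast
  qed
  then have null: "A - U \<in> null_sets (iid I)"
    by (rule null_sets_subset[OF ties_null[OF fin] sets.Diff[OF A U]])
  have disj: "disjoint_family_on (\<lambda>a. A \<inter> max_at I a) I"
    using disjoint_family_max_at[of I] unfolding disjoint_family_on_def by blast
  have "U \<subseteq> A"
    by (auto simp: U_def)
  then have "emeasure (iid I) A = emeasure (iid I) (U \<union> (A - U))"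
    by (simp add: Un_absorb1)
  also have "\<dots> = emeasure (iid I) U"
    by (rule emeasure_Un_null_set[OF U null])
  also have "\<dots> = (\<Sum>a\<in>I. emeasure (iid I) (A \<inter> max_at I a))"
    unfolding U_def using A sets_max_at[OF fin] by (intro sum_emeasure[symmetric] disj fin) auto
  also have "\<dots> = (\<Sum>a\<in>I. \<integral>\<^sup>+y. emeasure (iid (I-{a})) (max_section I A a y) \<partial>M)"
    by (rule sum.cong[OF refl], rule emeasure_Int_max_at[OF fin _ A])
  finally show ?thesis .
qed

definition mass_below :: "real \<Rightarrow> ennreal" where
  "mass_below y = emeasure M {..<y}"

lemma borel_measurable_mass_below [measurable]: "mass_below \<in> borel_measurable M"
proof -
  have "mono (\<lambda>y. measure M {..<y})"
    by (intro monoI finite_measure_mono) auto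
  then have "(\<lambda>y. ennreal (measure M {..<y})) \<in> borel_measurable borel"
    using borel_measurable_mono by measurable
  moreover have "mass_below = (\<lambda>y. ennreal (measure M {..<y}))"
    by (simp add: fun_eq_iff mass_below_def emeasure_eq_measure)
  ultimately show ?thesis
    by (simp add: measurable_cong_sets[OF events_eq_borel refl])
qed

(* Split S^(m+1) according to which coordinate is the maximum: each of the m+1 parts contributes
   the integral. *)
lemma nn_integral_mass_below_power:
  assumes S: "S \<in> sets borel" "down_closed S"
  shows "of_nat (Suc m) * (\<integral>\<^sup>+y. indicator S y * mass_below y ^ m \<partial>M) = emeasure M S ^ Suc m"
proof -
  define I where "I = {0..m}"
  define A where "A = {\<omega>\<in>space (iid I). \<forall>i\<in>I. \<omega> i \<in> S}"
  have I: "finite I" "card I = Suc m" "I \<noteq> {}"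
    by (auto simp: I_def)
  have A: "A \<in> sets (iid I)"
    unfolding A_def using I S by measurable
  have "max_section I A a y = (if y \<in> S then {x\<in>space (iid (I-{a})). \<forall>b\<in>I-{a}. x b \<in> {..<y}} else {})"
    if "a \<in> I" for a y
    using that S(2) by (auto simp: max_section_def A_def down_closed_def space_iid PiE_def extensional_def)
  then have section_mass: "emeasure (iid (I-{a})) (max_section I A a y) = indicator S y * mass_below y ^ m"
    if "a \<in> I" for a y
    using that I emeasure_iid_box[of "I-{a}" "{..<y}"] by (simp add: mass_below_def)
  have "emeasure M S ^ Suc m = emeasure (iid I) A"
    unfolding A_def using emeasure_iid_box[OF I(1) S(1)] I(2) by simp
  also have "\<dots> = (\<Sum>a\<in>I. \<integral>\<^sup>+y. indicator S y * mass_below y ^ m \<partial>M)"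
    unfolding emeasure_iid_split_max[OF I(1,3) A] by (simp add: section_mass)
  finally show ?thesis
    using I(2) by simp
qed

lemma nn_integral_mass_below_power_UNIV:
  "of_nat (Suc m) * (\<integral>\<^sup>+y. indicator UNIV y * mass_below y ^ m \<partial>M) = 1"
  using nn_integral_mass_below_power[of UNIV m] emeasure_space_1 by (simp add: down_closed_def)

definition chain_set :: "nat \<Rightarrow> nat \<Rightarrow> (nat + nat \<times> nat) set \<Rightarrow> real set \<Rightarrow> ((nat + nat \<times> nat) \<Rightarrow> real) set"
  where "chain_set l r W S = {\<omega>\<in>space (iid W). chain_event l r \<omega> \<and> (\<forall>i\<in>W. \<omega> i \<in> S)}"

definition chain_mass :: "nat \<Rightarrow> nat \<Rightarrow> real set \<Rightarrow> ennreal" where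
  "chain_mass l r S = emeasure (iid (chain_block l r)) (chain_set l r (chain_block l r) S)"

lemma pred_chain_event:
  assumes "chain_support l r \<subseteq> W"
  shows "Measurable.pred (iid W) (chain_event l r)"
  unfolding chain_event_def
proof (intro pred_intros_finite finite_atLeastAtMost)
  fix j assume "j \<in> {Suc l..r}"
  then have "{Inl (j-1), Inl j, Inr (j,0), Inr (j,1)} \<subseteq> chain_support l r"
    unfolding chain_support_def by blast
  then have "(\<lambda>\<omega>. \<omega> i) \<in> borel_measurable (iid W)" if "i \<in> {Inl (j-1), Inl j, Inr (j,0), Inr (j,1)}" for i
    using that assms measurable_component_singleton[of i W "\<lambda>_. M"]
    by (auto simp: measurable_cong_sets[OF events_eq_borel refl])
  then show "Measurable.pred (iid W) (\<lambda>\<omega>. dominated_at \<omega> j)"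
    unfolding dominated_at_def pred_def by (intro borel_measurable_le borel_measurable_max) auto
qed

lemma pred_chain_set:
  assumes "finite W" "chain_support l r \<subseteq> W" "S \<in> sets borel"
  shows "Measurable.pred (iid W) (\<lambda>\<omega>. chain_event l r \<omega> \<and> (\<forall>i\<in>W. \<omega> i \<in> S))"
  using pred_chain_event[OF assms(2)] assms(1,3) by measurable

lemma chain_condition_cong:
  assumes "chain_support l r \<subseteq> W" "\<forall>i\<in>W. \<omega> i = \<omega>' i"
  shows "(chain_event l r \<omega> \<and> (\<forall>i\<in>W. \<omega> i \<in> S)) = (chain_event l r \<omega>' \<and> (\<forall>i\<in>W. \<omega>' i \<in> S))"
  using assms chain_event_cong[of l r \<omega> \<omega>'] by auto

lemma chain_mass_box:
  assumes "finite J" "chain_block l r \<inter> J = {}"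
  shows "emeasure (iid (chain_block l r \<union> J)) (chain_set l r (chain_block l r \<union> J) {..<y})
     = chain_mass l r {..<y} * mass_below y ^ card J"
proof -
  have "chain_set l r (chain_block l r \<union> J) {..<y} = {\<omega>\<in>space (iid (chain_block l r \<union> J)).
      (chain_event l r \<omega> \<and> (\<forall>i\<in>chain_block l r. \<omega> i \<in> {..<y})) \<and> (\<forall>i\<in>J. \<omega> i \<in> {..<y})}"
    by (auto simp: chain_set_def)
  also have "emeasure (iid (chain_block l r \<union> J)) \<dots>
      = chain_mass l r {..<y} * emeasure (iid J) {\<omega>\<in>space (iid J). \<forall>i\<in>J. \<omega> i \<in> {..<y}}"
    unfolding chain_mass_def chain_set_def
    using assms chain_support_subset_chain_block
    by (intro emeasure_iid_conj_disjoint chain_condition_cong pred_chain_set) auto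
  finally show ?thesis
    using emeasure_iid_box[of J "{..<y}"] assms by (simp add: mass_below_def)
qed

lemma emeasure_chain_set_Un:
  assumes "finite W" "finite W'" "W \<inter> W' = {}" "chain_support l r \<subseteq> W" "chain_support l' r' \<subseteq> W'"
    and "S \<in> sets borel"
  shows "emeasure (iid (W \<union> W')) {\<omega>\<in>space (iid (W \<union> W')).
      (chain_event l r \<omega> \<and> (\<forall>i\<in>W. \<omega> i \<in> S)) \<and> (chain_event l' r' \<omega> \<and> (\<forall>i\<in>W'. \<omega> i \<in> S))}
    = emeasure (iid W) (chain_set l r W S) * emeasure (iid W') (chain_set l' r' W' S)"
  unfolding chain_set_def using assms
  by (intro emeasure_iid_conj_disjoint chain_condition_cong pred_chain_set) auto

lemma emeasure_left_wing:
  assumes "l \<le> k"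
  shows "emeasure (iid (left_wing l k)) (chain_set l (k-1) (left_wing l k) {..<y})
     = (if k = l then 1 else chain_mass l (k-1) {..<y} * mass_below y ^ 2)"
proof (cases "k = l")
  case True
  then have "chain_set l (k-1) (left_wing l k) {..<y} = space (iid (left_wing l k))"
    by (auto simp: chain_set_def chain_event_def left_wing_def)
  then show ?thesis
    using True prob_space.emeasure_space_1[OF prob_space_iid] by simp
next
  case False
  then show ?thesis
    using chain_mass_box[of "{Inr (k,0), Inr (k,1)}" l "k-1" y] assms by (simp add: left_wing_eq power2_eq_square)
qed

lemma emeasure_right_wing:
  assumes "k \<le> r"
  shows "emeasure (iid (right_wing k r)) (chain_set (Suc k) r (right_wing k r) {..<y})
     = (if k = r then 1 else chain_mass (Suc k) r {..<y} * mass_below y ^ 2)"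
proof (cases "k = r")
  case True
  then have "chain_set (Suc k) r (right_wing k r) {..<y} = space (iid (right_wing k r))"
    by (auto simp: chain_set_def chain_event_def right_wing_def)
  then show ?thesis
    using True prob_space.emeasure_space_1[OF prob_space_iid] by simp
next
  case False
  then show ?thesis
    using chain_mass_box[of "{Inr (Suc k,0), Inr (Suc k,1)}" "Suc k" r y] assms by (simp add: right_wing_eq power2_eq_square)
qed

lemma max_section_Inl:
  assumes lkr: "l \<le> k" "k \<le> r" and S: "down_closed S"
  shows "max_section (chain_block l r) (chain_set l r (chain_block l r) S) (Inl k) y
    = (if y \<in> S then {x\<in>space (iid (left_wing l k \<union> right_wing k r)).
          (chain_event l (k-1) x \<and> (\<forall>i\<in>left_wing l k. x i \<in> {..<y}))
          \<and> (chain_event (Suc k) r x \<and> (\<forall>i\<in>right_wing k r. x i \<in> {..<y}))}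
       else {})"
    (is "?lhs = ?rhs")
proof (rule set_eqI)
  fix x
  let ?W = "left_wing l k \<union> right_wing k r"
  have split: "chain_block l r - {Inl k} = ?W"
    using chain_block_minus_Inl[OF lkr] .
  show "x \<in> ?lhs \<longleftrightarrow> x \<in> ?rhs"
  proof (cases "x \<in> space (iid ?W) \<and> (\<forall>b\<in>?W. x b < y)")
    case True
    then have "x(Inl k := y) \<in> space (iid (chain_block l r))"
      using lkr split fun_upd_in_space_iid[of x "chain_block l r" "Inl k"] by simp
    moreover have "(\<forall>i\<in>chain_block l r. (x(Inl k := y)) i \<in> S) \<longleftrightarrow> y \<in> S"
      using True S lkr split unfolding down_closed_def by (metis DiffI fun_upd_apply Inl_in_chain_block singletonD)
    moreover have "chain_event l r (x(Inl k := y)) \<longleftrightarrow> chain_event l (k-1) x \<and> chain_event (Suc k) r x"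
      using chain_event_upd_Inl[OF lkr] True split by auto
    ultimately show ?thesis
      using True by (auto simp: max_section_def chain_set_def split)
  next
    case False
    then show ?thesis
      by (auto simp: max_section_def chain_set_def split)
  qed
qed

lemma emeasure_max_section_Inl:
  assumes "l \<le> k" "k \<le> r" "down_closed S"
  shows "emeasure (iid (chain_block l r - {Inl k}))
      (max_section (chain_block l r) (chain_set l r (chain_block l r) S) (Inl k) y)
    = indicator S y * (emeasure (iid (left_wing l k)) (chain_set l (k-1) (left_wing l k) {..<y})
        * emeasure (iid (right_wing k r)) (chain_set (Suc k) r (right_wing k r) {..<y}))"
proof -
  have "emeasure (iid (left_wing l k \<union> right_wing k r)) {x\<in>space (iid (left_wing l k \<union> right_wing k r)).
          (chain_event l (k-1) x \<and> (\<forall>i\<in>left_wing l k. x i \<in> {..<y}))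
          \<and> (chain_event (Suc k) r x \<and> (\<forall>i\<in>right_wing k r. x i \<in> {..<y}))}
      = emeasure (iid (left_wing l k)) (chain_set l (k-1) (left_wing l k) {..<y})
        * emeasure (iid (right_wing k r)) (chain_set (Suc k) r (right_wing k r) {..<y})"
    by (rule emeasure_chain_set_Un[OF _ _ left_wing_Int_right_wing chain_support_subset_left_wing
          chain_support_subset_right_wing]) simp_all
  then show ?thesis
    unfolding max_section_Inl[OF assms] chain_block_minus_Inl[OF assms(1,2)] by (cases "y \<in> S") simp_all
qed

lemma max_section_Inr:
  assumes "l < j" "j \<le> r" "i = 0 \<or> i = 1"
  shows "max_section (chain_block l r) (chain_set l r (chain_block l r) S) (Inr (j,i)) y = {}"
  using not_chain_event_upd_Inr[OF assms] by (auto simp: max_section_def chain_set_def)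

lemma chain_mass_recursion:
  assumes "l \<le> r" "S \<in> sets borel" "down_closed S"
  shows "chain_mass l r S = (\<Sum>k=l..r. \<integral>\<^sup>+y. indicator S y *
      ((if k = l then 1 else chain_mass l (k-1) {..<y} * mass_below y ^ 2) *
       (if k = r then 1 else chain_mass (Suc k) r {..<y} * mass_below y ^ 2)) \<partial>M)"
proof -
  let ?A = "chain_set l r (chain_block l r) S"
  let ?f = "\<lambda>a. \<integral>\<^sup>+y. emeasure (iid (chain_block l r - {a})) (max_section (chain_block l r) ?A a y) \<partial>M"
  have blk: "chain_block l r = Inl ` {l..r} \<union> Inr ` ({Suc l..r} \<times> {0,1})"
    by (rule chain_block_def)
  have "?A \<in> sets (iid (chain_block l r))"
    using pred_chain_set[OF finite_chain_block chain_support_subset_chain_block assms(2)]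
    by (simp add: chain_set_def pred_def)
  moreover have "chain_block l r \<noteq> {}"
    using assms(1) Inl_in_chain_block[of l l r] by blast
  ultimately have "chain_mass l r S = (\<Sum>a\<in>chain_block l r. ?f a)"
    unfolding chain_mass_def by (intro emeasure_iid_split_max) auto
  also have "\<dots> = (\<Sum>a\<in>Inl ` {l..r}. ?f a) + (\<Sum>a\<in>Inr ` ({Suc l..r} \<times> {0,1}). ?f a)"
    using sum.union_disjoint[of "Inl ` {l..r}" "Inr ` ({Suc l..r} \<times> {0,1})" ?f, folded blk] by auto
  also have "(\<Sum>a\<in>Inr ` ({Suc l..r} \<times> {0,1}). ?f a) = 0"
    by (intro sum.neutral) (auto simp: max_section_Inr)
  also have "(\<Sum>a\<in>Inl ` {l..r}. ?f a) = (\<Sum>k=l..r. ?f (Inl k))"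
    by (simp add: sum.reindex)
  also have "\<dots> = (\<Sum>k=l..r. \<integral>\<^sup>+y. indicator S y *
      ((if k = l then 1 else chain_mass l (k-1) {..<y} * mass_below y ^ 2) *
       (if k = r then 1 else chain_mass (Suc k) r {..<y} * mass_below y ^ 2)) \<partial>M)"
  proof (intro sum.cong refl nn_integral_cong)
    fix k y assume "k \<in> {l..r}"
    then show "emeasure (iid (chain_block l r - {Inl k})) (max_section (chain_block l r) ?A (Inl k) y)
      = indicator S y * ((if k = l then 1 else chain_mass l (k-1) {..<y} * mass_below y ^ 2) *
         (if k = r then 1 else chain_mass (Suc k) r {..<y} * mass_below y ^ 2))"
      using emeasure_max_section_Inl[of l k r S y] emeasure_left_wing[of l k y]
        emeasure_right_wing[of k r y] assms(3) by simp
  qed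
  finally show ?thesis
    by simp
qed

lemma chain_mass_base:
  assumes "S \<in> sets borel"
  shows "chain_mass l l S = emeasure M S"
proof -
  have "chain_block l l = {Inl l}"
    by (auto simp: chain_block_def)
  moreover have "chain_set l l W S = {\<omega>\<in>space (iid W). \<forall>i\<in>W. \<omega> i \<in> S}" for W
    by (simp add: chain_set_def chain_event_def)
  ultimately show ?thesis
    using emeasure_iid_box[of "{Inl l}" S] assms by (simp add: chain_mass_def)
qed

lemma chain_mass_0_UNIV:
  assumes "0 < n"
  shows "chain_mass 0 n UNIV = ennreal (pN M n)"
proof -
  have "event M n = chain_set 0 n (chain_block 0 n) UNIV"
    by (simp add: event_def chain_set_def chain_event_def dominated_at_def jointM_def idx_eq_chain_block)
  then show ?thesis
    using assms prob_space_iid[THEN prob_space.finite_measure, THEN finite_measure.emeasure_eq_measure]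
    by (simp add: chain_mass_def pN_def jointM_def idx_eq_chain_block)
qed

lemma pN_nonneg: "0 \<le> pN M n"
  by (simp add: pN_def)

lemma chain_mass_pair_weight:
  assumes "chain_mass a b {..<y} = ennreal (pN M (b-a)) * mass_below y ^ (3*(b-a)+1)"
  shows "chain_mass a b {..<y} * mass_below y ^ 2
    = ennreal (case_nat 1 (pN M) (Suc (b-a))) * mass_below y ^ (3 * Suc (b-a))"
proof -
  have "mass_below y ^ (3*(b-a)+1) * mass_below y ^ 2 = mass_below y ^ (3 * Suc (b-a))"
    unfolding power_add[symmetric] by (rule arg_cong[where f = "power (mass_below y)"]) simp
  then show ?thesis
    using assms by (simp add: mult.assoc)
qed

lemma left_factor_eq:
  assumes "l \<le> k" "k - l \<le> n"
    and IH: "\<And>a b y. a \<le> b \<Longrightarrow> b - a < n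
      \<Longrightarrow> chain_mass a b {..<y} = ennreal (pN M (b-a)) * mass_below y ^ (3*(b-a)+1)"
  shows "(if k = l then 1 else chain_mass l (k-1) {..<y} * mass_below y ^ 2)
    = ennreal (case_nat 1 (pN M) (k-l)) * mass_below y ^ (3*(k-l))"
proof (cases "k = l")
  case False
  then have ab: "l \<le> k - 1" "k - 1 - l < n" and len: "Suc (k - 1 - l) = k - l"
    using assms(1,2) by (arith+)
  have "chain_mass l (k-1) {..<y} * mass_below y ^ 2
      = ennreal (case_nat 1 (pN M) (Suc (k-1-l))) * mass_below y ^ (3 * Suc (k-1-l))"
    by (rule chain_mass_pair_weight) (rule IH[OF ab])
  then show ?thesis
    by (simp only: len if_not_P[OF False])
qed simp

lemma right_factor_eq:
  assumes "k \<le> r" "r - k \<le> n"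
    and IH: "\<And>a b y. a \<le> b \<Longrightarrow> b - a < n
      \<Longrightarrow> chain_mass a b {..<y} = ennreal (pN M (b-a)) * mass_below y ^ (3*(b-a)+1)"
  shows "(if k = r then 1 else chain_mass (Suc k) r {..<y} * mass_below y ^ 2)
    = ennreal (case_nat 1 (pN M) (r-k)) * mass_below y ^ (3*(r-k))"
proof (cases "k = r")
  case False
  then have ab: "Suc k \<le> r" "r - Suc k < n" and len: "Suc (r - Suc k) = r - k"
    using assms(1,2) by (arith+)
  have "chain_mass (Suc k) r {..<y} * mass_below y ^ 2
      = ennreal (case_nat 1 (pN M) (Suc (r - Suc k))) * mass_below y ^ (3 * Suc (r - Suc k))"
    by (rule chain_mass_pair_weight) (rule IH[OF ab])
  then show ?thesis
    by (simp only: len if_not_P[OF False])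
qed simp

lemma chain_mass_step:
  assumes n: "0 < n" and S: "S \<in> sets borel" "down_closed S"
    and IH: "\<And>a b y. a \<le> b \<Longrightarrow> b - a < n
      \<Longrightarrow> chain_mass a b {..<y} = ennreal (pN M (b-a)) * mass_below y ^ (3*(b-a)+1)"
  shows "chain_mass l (l+n) S = ennreal (\<Sum>k\<le>n. case_nat 1 (pN M) k * case_nat 1 (pN M) (n-k))
      * (\<integral>\<^sup>+y. indicator S y * mass_below y ^ (3*n) \<partial>M)"
proof -
  let ?q = "case_nat 1 (pN M)"
  have q_nonneg: "0 \<le> ?q k" for k
    by (cases k) (simp_all add: pN_nonneg)
  have integrand: "indicator S y * ((if k = l then 1 else chain_mass l (k-1) {..<y} * mass_below y ^ 2)
        * (if k = l+n then 1 else chain_mass (Suc k) (l+n) {..<y} * mass_below y ^ 2))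
      = ennreal (?q (k-l) * ?q (l+n-k)) * (indicator S y * mass_below y ^ (3*n))"
    if "k \<in> {l..l+n}" for k y
  proof -
    have "l \<le> k" "k \<le> l+n"
      using that by auto
    have L: "(if k = l then 1 else chain_mass l (k-1) {..<y} * mass_below y ^ 2)
        = ennreal (?q (k-l)) * mass_below y ^ (3*(k-l))"
      by (rule left_factor_eq[where n = n, OF \<open>l \<le> k\<close> _ IH]) (use \<open>k \<le> l+n\<close> in simp)
    have R: "(if k = l+n then 1 else chain_mass (Suc k) (l+n) {..<y} * mass_below y ^ 2)
        = ennreal (?q (l+n-k)) * mass_below y ^ (3*(l+n-k))"
      by (rule right_factor_eq[where n = n, OF \<open>k \<le> l+n\<close> _ IH]) (use \<open>l \<le> k\<close> in simp)
    have "3*(k-l) + 3*(l+n-k) = 3*n"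
      using \<open>l \<le> k\<close> \<open>k \<le> l+n\<close> by simp
    then show ?thesis
      unfolding L R by (simp add: ennreal_mult q_nonneg power_add[symmetric] ac_simps)
  qed
  have "chain_mass l (l+n) S = (\<Sum>k=l..l+n. \<integral>\<^sup>+y. ennreal (?q (k-l) * ?q (l+n-k))
      * (indicator S y * mass_below y ^ (3*n)) \<partial>M)"
    unfolding chain_mass_recursion[OF le_add1 S] by (intro sum.cong refl nn_integral_cong integrand)
  also have "\<dots> = (\<Sum>k=l..l+n. ennreal (?q (k-l) * ?q (l+n-k)))
      * (\<integral>\<^sup>+y. indicator S y * mass_below y ^ (3*n) \<partial>M)"
    using S by (simp add: nn_integral_cmult sum_distrib_right)
  also have "(\<Sum>k=l..l+n. ennreal (?q (k-l) * ?q (l+n-k))) = ennreal (\<Sum>k\<le>n. ?q k * ?q (n-k))"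
    using sum.shift_bounds_cl_nat_ivl[of "\<lambda>k. ?q (k-l) * ?q (l+n-k)" 0 l n]
    by (simp add: q_nonneg atLeast0AtMost add.commute)
  finally show ?thesis .
qed

lemma pN_recurrence_step:
  assumes n: "0 < n"
    and IH: "\<And>a b y. a \<le> b \<Longrightarrow> b - a < n
      \<Longrightarrow> chain_mass a b {..<y} = ennreal (pN M (b-a)) * mass_below y ^ (3*(b-a)+1)"
  shows "(3 * real n + 1) * pN M n = (\<Sum>k\<le>n. case_nat 1 (pN M) k * case_nat 1 (pN M) (n-k))"
proof -
  let ?c = "\<Sum>k\<le>n. case_nat 1 (pN M) k * case_nat 1 (pN M) (n-k)"
  let ?J = "\<integral>\<^sup>+y. indicator UNIV y * mass_below y ^ (3*n) \<partial>M"
  have "ennreal (pN M n) = ennreal ?c * ?J"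
    using chain_mass_0_UNIV[OF n] chain_mass_step[OF n _ _ IH, of UNIV 0] by (simp add: down_closed_def)
  then have "of_nat (Suc (3*n)) * ennreal (pN M n) = ennreal ?c * (of_nat (Suc (3*n)) * ?J)"
    by (simp add: ac_simps)
  then have "ennreal ((3 * real n + 1) * pN M n) = ennreal ?c"
    using nn_integral_mass_below_power_UNIV[of "3*n"] pN_nonneg
    by (simp add: ennreal_mult ennreal_of_nat_eq_real_of_nat add.commute)
  moreover have "0 \<le> ?c"
    by (intro sum_nonneg mult_nonneg_nonneg) (simp_all add: pN_nonneg split: nat.split)
  ultimately show ?thesis
    using pN_nonneg[of n] by simp
qed

lemma chain_mass_eq:
  assumes "S \<in> sets borel" "down_closed S"
  shows "chain_mass l (l+n) S = ennreal (pN M n) * emeasure M S ^ (3*n+1)"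
  using assms
proof (induction n arbitrary: l S rule: less_induct)
  case (less n)
  have IH: "chain_mass a b {..<y} = ennreal (pN M (b-a)) * mass_below y ^ (3*(b-a)+1)"
    if "a \<le> b" "b - a < n" for a b y
    using less.IH[OF that(2), of "{..<y}" a] that(1) by (simp add: down_closed_def mass_below_def)
  show ?case
  proof (cases "n = 0")
    case True
    then show ?thesis
      using chain_mass_base[OF less.prems(1)] by (simp add: pN_def)
  next
    case False
    then have n: "0 < n"
      by simp
    let ?c = "\<Sum>k\<le>n. case_nat 1 (pN M) k * case_nat 1 (pN M) (n-k)"
    let ?J = "\<integral>\<^sup>+y. indicator S y * mass_below y ^ (3*n) \<partial>M"
    have "chain_mass l (l+n) S = ennreal ?c * ?J"
      by (rule chain_mass_step[OF n less.prems IH])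
    also have "?c = pN M n * real (Suc (3*n))"
      using pN_recurrence_step[OF n IH] by (simp add: algebra_simps)
    then have "ennreal ?c = ennreal (pN M n) * of_nat (Suc (3*n))"
      by (simp add: ennreal_mult pN_nonneg ennreal_of_nat_eq_real_of_nat del: of_nat_Suc)
    also have "ennreal (pN M n) * of_nat (Suc (3*n)) * ?J = ennreal (pN M n) * emeasure M S ^ (3*n+1)"
      using nn_integral_mass_below_power[OF less.prems, of "3*n"] by (simp add: mult.assoc)
    finally show ?thesis .
  qed
qed

(* case_nat 1 p is the coefficient sequence of 1 + z f(z), so this is the coefficient form of
   f + 3 z f' = (1 + z f)^2. *)
lemma pN_recurrence: "(3 * real n + 1) * pN M n = (\<Sum>k\<le>n. case_nat 1 (pN M) k * case_nat 1 (pN M) (n-k))"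
proof (cases "n = 0")
  case False
  have "chain_mass a b {..<y} = ennreal (pN M (b-a)) * mass_below y ^ (3*(b-a)+1)" if "a \<le> b" for a b y
    using chain_mass_eq[of "{..<y}" a "b-a"] that by (simp add: down_closed_def mass_below_def)
  then show ?thesis
    using False by (intro pN_recurrence_step) auto
qed (simp add: pN_def)

lemma pN_le_1: "pN M n \<le> 1"
  unfolding pN_def jointM_def using prob_space.prob_le_1[OF prob_space_iid] by auto

end

lemma sum_case_nat_1_conv:
  fixes p :: "nat \<Rightarrow> 'a :: comm_semiring_1"
  assumes "0 < n"
  shows "(\<Sum>k\<le>n. case_nat 1 p k * case_nat 1 p (n-k)) = 2 * p (n-1) + (\<Sum>j=2..n. p (j-2) * p (n-j))"
proof -
  obtain m where m: "n = Suc m"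
    using assms gr0_implies_Suc by blast
  have "(\<Sum>k<m. case_nat 1 p (Suc k) * case_nat 1 p (Suc m - Suc k)) = (\<Sum>k<m. p k * p (m - Suc k))"
  proof (intro sum.cong refl)
    fix k assume "k \<in> {..<m}"
    then have "Suc m - Suc k = Suc (m - Suc k)"
      by simp
    then show "case_nat 1 p (Suc k) * case_nat 1 p (Suc m - Suc k) = p k * p (m - Suc k)"
      by (simp only: nat.case)
  qed
  then have "(\<Sum>k\<le>Suc m. case_nat 1 p k * case_nat 1 p (Suc m - k))
      = p m + (\<Sum>k<m. p k * p (m - Suc k)) + p m"
    by (simp add: sum.atMost_Suc sum.atMost_shift add.assoc)
  also have "(\<Sum>k<m. p k * p (m - Suc k)) = (\<Sum>j=2..Suc m. p (j-2) * p (Suc m - j))"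
    by (rule sum.reindex_bij_witness[where i = "\<lambda>j. j - 2" and j = "\<lambda>k. k + 2"]) auto
  finally have sum_eq: "(\<Sum>k\<le>Suc m. case_nat 1 p k * case_nat 1 p (Suc m - k))
      = p m + (\<Sum>j=2..Suc m. p (j-2) * p (Suc m - j)) + p m" .
  show ?thesis
    unfolding m diff_Suc_1 mult_2 sum_eq by (simp only: add_ac)
qed

lemma fps_riccati_of_recurrence:
  fixes p :: "nat \<Rightarrow> real"
  assumes rec: "\<And>n. (3 * real n + 1) * p n = (\<Sum>k\<le>n. case_nat 1 p k * case_nat 1 p (n-k))"
  defines "A \<equiv> Abs_fps (\<lambda>n. of_real (p n) :: 'a :: {comm_ring_1, real_algebra_1})"
  shows "A + fps_const 3 * (fps_X * fps_deriv A) = (1 + fps_X * A)^2"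
proof (rule fps_ext)
  fix n
  have shifted: "fps_nth (1 + fps_X * A) k = of_real (case_nat 1 p k)" for k
    by (cases k) (simp_all add: A_def fps_X_mult_nth)
  have "fps_nth (A + fps_const 3 * (fps_X * fps_deriv A)) n = of_real ((3 * real n + 1) * p n)"
    by (cases n) (simp_all add: A_def fps_X_mult_nth algebra_simps)
  also have "\<dots> = fps_nth ((1 + fps_X * A)^2) n"
    unfolding rec power2_eq_square fps_mult_nth shifted
    by (simp add: atLeast0AtMost)
  finally show "fps_nth (A + fps_const 3 * (fps_X * fps_deriv A)) n = fps_nth ((1 + fps_X * A)^2) n" .
qed

lemma one_le_fps_conv_radius:
  fixes a :: "nat \<Rightarrow> 'a :: {banach, real_normed_div_algebra}"
  assumes "\<And>n. norm (a n) \<le> 1"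
  shows "1 \<le> fps_conv_radius (Abs_fps a)"
  unfolding fps_conv_radius_def fps_nth_Abs_fps
proof (rule conv_radius_geI_ex')
  fix r :: real assume r: "0 < r" "ereal r < 1"
  show "summable (\<lambda>n. a n * of_real r ^ n)"
  proof (rule summable_comparison_test[OF _ summable_geometric[of r]])
    show "\<exists>N. \<forall>n\<ge>N. norm (a n * of_real r ^ n) \<le> r ^ n"
      using r assms by (auto simp: norm_mult norm_power intro!: mult_left_le_one_le)
    show "norm r < 1"
      using r by simp
  qed
qed

lemma eval_fps_riccati:
  fixes A :: "complex fps"
  assumes ode: "A + fps_const 3 * (fps_X * fps_deriv A) = (1 + fps_X * A)^2"
    and z: "norm z < fps_conv_radius A"
  shows "eval_fps A z + 3 * z * deriv (eval_fps A) z = 1 + 2 * z * eval_fps A z + z^2 * (eval_fps A z)^2"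
proof -
  have rad_mult: "norm z < fps_conv_radius (f * g)"
    if "norm z < fps_conv_radius f" "norm z < fps_conv_radius g" for f g :: "complex fps"
    by (rule less_le_trans[OF _ fps_conv_radius_mult]) (use that in simp)
  have rad_add: "norm z < fps_conv_radius (f + g)"
    if "norm z < fps_conv_radius f" "norm z < fps_conv_radius g" for f g :: "complex fps"
    by (rule less_le_trans[OF _ fps_conv_radius_add]) (use that in simp)
  have z': "norm z < fps_conv_radius (fps_deriv A)"
    using z fps_conv_radius_deriv[of A] by (rule less_le_trans)
  have "eval_fps (A + fps_const 3 * (fps_X * fps_deriv A)) z = eval_fps A z + 3 * (z * deriv (eval_fps A) z)"
    using z z' by (simp add: eval_fps_add eval_fps_mult rad_mult eval_fps_deriv)
  moreover have "eval_fps ((1 + fps_X * A)^2) z = (1 + z * eval_fps A z)^2"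
    using z by (simp add: eval_fps_power eval_fps_add eval_fps_mult rad_mult rad_add)
  ultimately show ?thesis
    using ode by (simp add: power2_eq_square algebra_simps)
qed

context continuous_real_distribution
begin

definition pN_fps :: "complex fps" where
  "pN_fps = Abs_fps (\<lambda>N. complex_of_real (pN M N))"

lemma gf_eq_eval_pN_fps: "gf M = eval_fps pN_fps"
  by (simp add: fun_eq_iff gf_def eval_fps_def pN_fps_def)

lemma norm_less_fps_conv_radius_pN_fps:
  assumes "z \<in> ball 0 1"
  shows "norm z < fps_conv_radius pN_fps"
proof -
  have "1 \<le> fps_conv_radius pN_fps"
    unfolding pN_fps_def by (rule one_le_fps_conv_radius) (use pN_nonneg pN_le_1 in simp)
  then show ?thesis
    using assms by (meson ereal_less(3) less_le_trans mem_ball_0)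
qed

lemma pN_fps_riccati: "pN_fps + fps_const 3 * (fps_X * fps_deriv pN_fps) = (1 + fps_X * pN_fps)^2"
  unfolding pN_fps_def by (rule fps_riccati_of_recurrence) (rule pN_recurrence)

end

theorem mainTheorem8:
  fixes M :: "real measure"
  assumes "prob_space M"
    and "sets M = sets borel"
    and "\<And>x. measure M {x} = 0"
  shows "(\<forall>N\<ge>1. pN M N = 1 / (3 * real N + 1) *
            (2 * pN M (N - 1) + (\<Sum>j=2..N. pN M (j - 2) * pN M (N - j))))
       \<and> (\<exists>r>0. (\<forall>z\<in>ball 0 r. summable (\<lambda>N. complex_of_real (pN M N) * z ^ N))
               \<and> gf M holomorphic_on ball 0 r
               \<and> (\<forall>z\<in>ball 0 r. gf M z + 3 * z * deriv (gf M) z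
                                 = 1 + 2 * z * gf M z + z\<^sup>2 * (gf M z)\<^sup>2))"
proof -
  interpret continuous_real_distribution M
    using assms by (simp add: continuous_real_distribution_def continuous_real_distribution_axioms_def
        real_distribution_def real_distribution_axioms_def)
  have "pN M N = 1 / (3 * real N + 1) * (2 * pN M (N - 1) + (\<Sum>j=2..N. pN M (j - 2) * pN M (N - j)))"
    if "N \<ge> 1" for N
    using pN_recurrence[of N] sum_case_nat_1_conv[of N "pN M"] that by (simp add: field_simps)
  moreover have "summable (\<lambda>N. complex_of_real (pN M N) * z ^ N)" if "z \<in> ball 0 1" for z
    using summable_fps[OF norm_less_fps_conv_radius_pN_fps[OF that]] by (simp add: pN_fps_def)
  moreover have "gf M holomorphic_on ball 0 1"
    unfolding gf_eq_eval_pN_fps using norm_less_fps_conv_radius_pN_fps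
    by (intro holomorphic_on_eval_fps) auto
  moreover have "gf M z + 3 * z * deriv (gf M) z = 1 + 2 * z * gf M z + z\<^sup>2 * (gf M z)\<^sup>2"
    if "z \<in> ball 0 1" for z
    unfolding gf_eq_eval_pN_fps
    using eval_fps_riccati[OF pN_fps_riccati norm_less_fps_conv_radius_pN_fps[OF that]] .
  ultimately show ?thesis
    by (intro conjI exI[of _ 1]) auto
qed

end
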